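(* Let $\{m_k:k\ge0\}$ be positive reals with $\sum_k m_k=\infty$ and $m_k\to0$; let $S_0=0$ and $S_{k+1}=\sum_{i=0}^k m_i$. Define functions $f_j:(S_j,S_{j+1}]\to\mathbb{R}$, $j\ge0$, recursively with constants $c_0=0$ and $c_j=f_{j-1}(S_j)$ for $j\ge1$, by $$f_j(x)=\begin{cases}-x+S_j+c_j & x\in(S_j,S_j+\tfrac{m_j}{16})\\ \tfrac{8}{m_j}(x-S_j-\tfrac{m_j}{8})^2-\tfrac{3m_j}{32}+c_j & x\in[S_j+\tfrac{m_j}{16},S_j+\tfrac{3m_j}{16})\\ -\tfrac{5m_j}{16}\exp\!\big(\tfrac{5m_j/16}{x-S_j-m_j/2}+1\big)+\tfrac{m_j}{4}+c_j & x\in[S_j+\tfrac{3m_j}{16},S_j+\tfrac{m_j}{2})\\ \tfrac{m_j}{4}+c_j & x=S_j+\tfrac{m_j}{2}\\ \tfrac{5m_j}{16}\exp\!\big(\tfrac{-5m_j/16}{x-S_j-m_j/2}+1\big)+\tfrac{m_j}{4}+c_j & x\in(S_j+\tfrac{m_j}{2},S_j+\tfrac{13m_j}{16})\\ -\tfrac{8}{m_j}(x-S_j-\tfrac{7m_j}{8})^2+\tfrac{19m_j}{32}+c_j & x\in[S_j+\tfrac{13m_j}{16},S_j+\tfrac{15m_j}{16})\\ -x+S_j+\tfrac{3m_j}{2}+c_j & x\in[S_j+\tfrac{15m_j}{16},S_{j+1}].\end{cases}$$ Then for each $j\ge0$, the continuous extension of $f_j$ to $[S_j,S_{j+1}]$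 (defined at $S_j$ by $\lim_{x\downarrow S_j}f_j(x)$) is continuous on $[S_j,S_{j+1}]$, is bounded from below by $c_j-3m_j/32$ (so by $-3m_0/32$ when $j=0$), is differentiable on $[S_j,S_{j+1}]$ (with one-sided derivatives at the endpoints) with $\dot f_j(S_j)=\dot f_j(S_{j+1})=-1$, and its derivative is locally Lipschitz continuous.
   Context: $\dot f_j$ denotes the derivative of $f_j$, understood as a one-sided derivative at the endpoints of $[S_j,S_{j+1}]$. *)

theory Defs
  imports "HOL-Analysis.Analysis"
begin

definition Sseq :: "(nat \<Rightarrow> real) \<Rightarrow> nat \<Rightarrow> real" where
  "Sseq m j = (\<Sum>i<j. m i)"

definition fpiece :: "real \<Rightarrow> real \<Rightarrow> real \<Rightarrow> real \<Rightarrow> real" where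
  "fpiece mj s c x =
    (if x < s + mj/16 then - x + s + c
     else if x < s + 3*mj/16 then 8/mj * (x - s - mj/8)^2 - 3*mj/32 + c
     else if x < s + mj/2 then - (5*mj/16) * exp ((5*mj/16) / (x - s - mj/2) + 1) + mj/4 + c
     else if x = s + mj/2 then mj/4 + c
     else if x < s + 13*mj/16 then (5*mj/16) * exp ((- (5*mj/16)) / (x - s - mj/2) + 1) + mj/4 + c
     else if x < s + 15*mj/16 then - 8/mj * (x - s - 7*mj/8)^2 + 19*mj/32 + c
     else - x + s + 3*mj/2 + c)"

fun cseq :: "(nat \<Rightarrow> real) \<Rightarrow> nat \<Rightarrow> real" where
  "cseq m 0 = 0"
| "cseq m (Suc j) = fpiece (m j) (Sseq m j) (cseq m j) (Sseq m (Suc j))"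

text \<open>f_j on (S_j, S_(j+1)] (the formula; only its values on that interval matter).\<close>
definition fj :: "(nat \<Rightarrow> real) \<Rightarrow> nat \<Rightarrow> real \<Rightarrow> real" where
  "fj m j x = fpiece (m j) (Sseq m j) (cseq m j) x"

definition fext :: "(nat \<Rightarrow> real) \<Rightarrow> nat \<Rightarrow> real \<Rightarrow> real" where
  "fext m j x = (if x = Sseq m j then Lim (at_right (Sseq m j)) (fj m j) else fj m j x)"

end

theory Submission
  imports Defs "HOL-Real_Asymp.Real_Asymp"
begin

(* Each f_j is the affine copy c_j + m_j g((x - S_j)/m_j) of one profile g = fpiece 1 0 0 on [0,1].
   On each of [0,1/16], [1/16,3/16], [3/16,13/16], [13/16,15/16], [15/16,1], the profile g and its
   candidate derivative coincide with a C^2 function on the real line and its derivative: a line,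
   a parabola, and in the middle an odd combination of two copies of the flat function exp(-1/t),
   extended by 0 to t <= 0.  A C^2 function has a Lipschitz derivative on a compact interval, and
   the pieces fit together to first order at the breakpoints, so g is differentiable on [0,1] with
   Lipschitz derivative; moreover g'(0) = g'(1) = -1 and g >= -3/32. *)

lemma eventually_zero_extension_nhds:
  fixes t :: real
  assumes "t \<noteq> 0"
  shows "eventually (\<lambda>u. (if u \<le> 0 then 0 else h u) = (if t \<le> 0 then 0 else h u)) (nhds t)"
proof (cases "t < 0")
  case True
  then show ?thesis
    using eventually_nhds_in_open [of "{..<0}" t] by (auto elim!: eventually_mono)
next
  case False
  with assms show ?thesis
    using eventually_nhds_in_open [of "{0<..}" t] by (auto elim!: eventually_mono)
qed

lemma tendsto_zero_extension_at_0:
  fixes h :: "real \<Rightarrow> real"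
  assumes "(h \<longlongrightarrow> 0) (at_right 0)"
  shows "((\<lambda>u. if u \<le> 0 then 0 else h u) \<longlongrightarrow> 0) (at 0)"
proof (rule filterlim_split_at)
  show "((\<lambda>u. if u \<le> 0 then 0 else h u) \<longlongrightarrow> 0) (at_left 0)"
    by (intro tendsto_eventually eventually_mono [OF eventually_at_left_real [of "-1"]]) auto
  show "((\<lambda>u. if u \<le> 0 then 0 else h u) \<longlongrightarrow> 0) (at_right 0)"
    using assms by (rule tendsto_cong [THEN iffD1, rotated])
      (intro eventually_mono [OF eventually_at_right_real [of 0 1]], auto)
qed

lemma has_real_derivative_zero_extension:
  fixes h h' :: "real \<Rightarrow> real"
  assumes deriv: "\<And>t. t > 0 \<Longrightarrow> (h has_real_derivative h' t) (at t)"
    and flat: "((\<lambda>t. h t / t) \<longlongrightarrow> 0) (at_right 0)"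
  shows "((\<lambda>t. if t \<le> 0 then 0 else h t) has_real_derivative (if t \<le> 0 then 0 else h' t)) (at t)"
proof (cases "t = 0")
  case True
  have "(\<lambda>u. ((if u \<le> 0 then 0 else h u) - 0) / (u - 0)) = (\<lambda>u. if u \<le> 0 then 0 else h u / u)"
    by auto
  with tendsto_zero_extension_at_0 [OF flat] True show ?thesis
    by (simp add: has_field_derivative_iff)
next
  case False
  then show ?thesis
    using deriv by (subst DERIV_cong_ev [OF refl eventually_zero_extension_nhds [OF False] refl]) auto
qed

lemma isCont_zero_extension:
  fixes h :: "real \<Rightarrow> real"
  assumes "\<And>t. t > 0 \<Longrightarrow> isCont h t" and "(h \<longlongrightarrow> 0) (at_right 0)"
  shows "isCont (\<lambda>t. if t \<le> 0 then 0 else h t) t"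
proof (cases "t = 0")
  case True
  with tendsto_zero_extension_at_0 [OF assms(2)] show ?thesis
    by (simp add: isCont_def)
next
  case False
  then show ?thesis
    using assms(1) by (subst isCont_cong [OF eventually_zero_extension_nhds [OF False]])
      (cases "t < 0", auto)
qed

lemma lipschitz_on_Icc_if_continuous_derivative:
  fixes f f' :: "real \<Rightarrow> real"
  assumes "\<And>x. x \<in> {a..b} \<Longrightarrow> (f has_real_derivative f' x) (at x within {a..b})"
    and "continuous_on {a..b} f'"
  obtains L where "L-lipschitz_on {a..b} f"
proof -
  obtain B where "B > 0" and B: "\<And>x. x \<in> {a..b} \<Longrightarrow> norm (f' x) \<le> B"
    using compact_imp_bounded[OF compact_continuous_image[OF assms(2) compact_Icc]]
    by (auto simp: bounded_pos)
  have "B-lipschitz_on {a..b} f"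
  proof (rule lipschitz_onI)
    show "dist (f x) (f y) \<le> B * dist x y" if "x \<in> {a..b}" "y \<in> {a..b}" for x y
      using field_differentiable_bound[OF convex_real_interval(5) assms(1) B that]
      by (simp add: dist_norm)
    show "0 \<le> B"
      using \<open>B > 0\<close> by simp
  qed
  then show thesis ..
qed

definition flat :: "real \<Rightarrow> real" where
  "flat t = (if t \<le> 0 then 0 else exp (- 1 / t))"

definition flat_deriv :: "real \<Rightarrow> real" where
  "flat_deriv t = (if t \<le> 0 then 0 else exp (- 1 / t) / t\<^sup>2)"

definition flat_deriv2 :: "real \<Rightarrow> real" where
  "flat_deriv2 t = (if t \<le> 0 then 0 else exp (- 1 / t) * (1 - 2 * t) / t ^ 4)"

lemma has_real_derivative_flat: "(flat has_real_derivative flat_deriv t) (at t)"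
  unfolding flat_def [abs_def] flat_deriv_def
proof (rule has_real_derivative_zero_extension)
  show "((\<lambda>t. exp (- 1 / t)) has_real_derivative exp (- 1 / t) / t\<^sup>2) (at t)" if "t > 0" for t
    using that by (auto intro!: derivative_eq_intros simp: power2_eq_square)
  show "((\<lambda>t::real. exp (- 1 / t) / t) \<longlongrightarrow> 0) (at_right 0)"
    by real_asymp
qed

lemma has_real_derivative_flat_deriv: "(flat_deriv has_real_derivative flat_deriv2 t) (at t)"
  unfolding flat_deriv_def [abs_def] flat_deriv2_def
proof (rule has_real_derivative_zero_extension)
  show "((\<lambda>t. exp (- 1 / t) / t\<^sup>2) has_real_derivative exp (- 1 / t) * (1 - 2 * t) / t ^ 4) (at t)"
    if "t > 0" for t
    using that by (auto intro!: derivative_eq_intros simp: field_simps eval_nat_numeral)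
  show "((\<lambda>t::real. exp (- 1 / t) / t\<^sup>2 / t) \<longlongrightarrow> 0) (at_right 0)"
    by real_asymp
qed

lemma isCont_flat_deriv2: "isCont flat_deriv2 t"
  unfolding flat_deriv2_def [abs_def]
  by (rule isCont_zero_extension) (auto intro!: continuous_intros, real_asymp)

definition has_lipschitz_derivative_on :: "(real \<Rightarrow> real) \<Rightarrow> (real \<Rightarrow> real) \<Rightarrow> real set \<Rightarrow> bool" where
  "has_lipschitz_derivative_on f f' S \<longleftrightarrow>
     (\<forall>x\<in>S. (f has_real_derivative f' x) (at x within S)) \<and> (\<exists>L. L-lipschitz_on S f')"

lemma has_lipschitz_derivative_on_concat:
  fixes a b c :: real
  assumes "a \<le> b" "b \<le> c"
    and left: "has_lipschitz_derivative_on f f' {a..b}"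
    and right: "has_lipschitz_derivative_on f f' {b..c}"
  shows "has_lipschitz_derivative_on f f' {a..c}"
  unfolding has_lipschitz_derivative_on_def
proof (intro conjI ballI)
  have vacuous: "(f has_real_derivative f' x) (at x within S)" if "x \<notin> closure S" for x S
    using not_in_closure_trivial_limitI[OF that] by (simp add: has_field_derivative_iff)
  have split: "{a..c} = {a..b} \<union> {b..c}"
    using assms(1,2) by auto
  fix x assume "x \<in> {a..c}"
  show "(f has_real_derivative f' x) (at x within {a..c})"
    unfolding split has_field_derivative_iff
  proof (rule Lim_Un)
    show "((\<lambda>y. (f y - f x) / (y - x)) \<longlongrightarrow> f' x) (at x within {a..b})"
      using left vacuous[of x "{a..b}"]
      by (cases "x \<in> {a..b}") (auto simp: has_lipschitz_derivative_on_def has_field_derivative_iff)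
    show "((\<lambda>y. (f y - f x) / (y - x)) \<longlongrightarrow> f' x) (at x within {b..c})"
      using right vacuous[of x "{b..c}"]
      by (cases "x \<in> {b..c}") (auto simp: has_lipschitz_derivative_on_def has_field_derivative_iff)
  qed
next
  obtain L M where "L-lipschitz_on {a..b} f'" "M-lipschitz_on {b..c} f'"
    using left right by (auto simp: has_lipschitz_derivative_on_def)
  from lipschitz_on_concat_max[OF this refl]
  show "\<exists>L. L-lipschitz_on {a..c} f'"
    by auto
qed

(* Agreement is required on [a,b) and at b separately, matching the half-open branches of fpiece. *)
lemma has_lipschitz_derivative_on_IccI:
  fixes f f' h h' h'' :: "real \<Rightarrow> real"
  assumes h: "\<And>x. (h has_real_derivative h' x) (at x)"
    and h': "\<And>x. (h' has_real_derivative h'' x) (at x)"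
    and h'': "continuous_on {a..b} h''"
    and f: "\<And>x. x \<in> {a..<b} \<Longrightarrow> f x = h x" "f b = h b"
    and f': "\<And>x. x \<in> {a..<b} \<Longrightarrow> f' x = h' x" "f' b = h' b"
  shows "has_lipschitz_derivative_on f f' {a..b}"
  unfolding has_lipschitz_derivative_on_def
proof (intro conjI ballI)
  have f_eq: "f x = h x" and f'_eq: "f' x = h' x" if "x \<in> {a..b}" for x
    using f f' that by (cases "x = b"; simp)+
  fix x assume x: "x \<in> {a..b}"
  have "(h has_real_derivative h' x) (at x within {a..b})"
    using h by (rule has_field_derivative_at_within)
  then have "(f has_real_derivative h' x) (at x within {a..b})"
    by (rule has_field_derivative_transform_within[OF _ zero_less_one x]) (simp add: f_eq)
  then show "(f has_real_derivative f' x) (at x within {a..b})"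
    using f'_eq[OF x] by simp
next
  have f'_eq: "f' x = h' x" if "x \<in> {a..b}" for x
    using f' that by (cases "x = b"; simp)
  obtain L where "L-lipschitz_on {a..b} h'"
    using lipschitz_on_Icc_if_continuous_derivative[OF has_field_derivative_at_within[OF h'] h''] .
  from lipschitz_on_transform[OF this f'_eq] show "\<exists>L. L-lipschitz_on {a..b} f'" ..
qed

lemma has_lipschitz_derivative_on_rescale:
  fixes f f' :: "real \<Rightarrow> real"
  assumes M: "M > 0" and f: "has_lipschitz_derivative_on f f' {0..1}"
  shows "has_lipschitz_derivative_on (\<lambda>x. c + M * f ((x - s) / M)) (\<lambda>x. f' ((x - s) / M)) {s..s+M}"
proof -
  define \<phi> where "\<phi> x = (x - s) / M" for x
  have image: "\<phi> ` {s..s+M} = {0..1}"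
    using M image_affinity_atLeastAtMost_div [of M "- s / M" s "s + M"]
    by (simp add: \<phi>_def diff_divide_distrib add_divide_distrib)
  have deriv: "((\<lambda>x. c + M * f (\<phi> x)) has_real_derivative f' (\<phi> x)) (at x within {s..s+M})"
    if "x \<in> {s..s+M}" for x
  proof -
    have "(f has_real_derivative f' (\<phi> x)) (at (\<phi> x) within \<phi> ` {s..s+M})"
      using f image that by (auto simp: has_lipschitz_derivative_on_def)
    moreover have "(\<phi> has_real_derivative 1 / M) (at x within {s..s+M})"
      unfolding \<phi>_def [abs_def] using M by (auto intro!: derivative_eq_intros)
    ultimately have "(f \<circ> \<phi> has_real_derivative f' (\<phi> x) * (1 / M)) (at x within {s..s+M})"
      by (rule DERIV_image_chain)
    then have "((\<lambda>x. c + M * (f \<circ> \<phi>) x) has_real_derivative 0 + M * (f' (\<phi> x) * (1 / M)))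
        (at x within {s..s+M})"
      by (intro DERIV_add DERIV_cmult DERIV_const)
    with M show ?thesis
      by simp
  qed
  obtain L where "L-lipschitz_on {0..1} f'"
    using f by (auto simp: has_lipschitz_derivative_on_def)
  moreover have "(1 / M)-lipschitz_on {s..s+M} \<phi>"
    using M by (intro lipschitz_onI) (auto simp: \<phi>_def dist_real_def diff_divide_distrib [symmetric])
  ultimately have "(L * (1 / M))-lipschitz_on {s..s+M} (\<lambda>x. f' (\<phi> x))"
    by (intro lipschitz_on_compose2) (simp_all add: image)
  with deriv show ?thesis
    unfolding has_lipschitz_derivative_on_def \<phi>_def by blast
qed

(* The exponential branches of g rewritten via exp((5/16)/(x - 1/2) + 1) = e * flat((16/5)(1/2 - x))
   for x < 1/2, and symmetrically for x > 1/2. *)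
definition flat_step :: "real \<Rightarrow> real" where
  "flat_step x = 5/16 * exp 1 * (flat (16/5 * (x - 1/2)) - flat (16/5 * (1/2 - x)))"

definition flat_step_deriv :: "real \<Rightarrow> real" where
  "flat_step_deriv x = exp 1 * (flat_deriv (16/5 * (x - 1/2)) + flat_deriv (16/5 * (1/2 - x)))"

definition flat_step_deriv2 :: "real \<Rightarrow> real" where
  "flat_step_deriv2 x = 16/5 * exp 1 * (flat_deriv2 (16/5 * (x - 1/2)) - flat_deriv2 (16/5 * (1/2 - x)))"

lemma has_real_derivative_flat_step: "(flat_step has_real_derivative flat_step_deriv x) (at x)"
  unfolding flat_step_def [abs_def] flat_step_deriv_def
  by (auto intro!: derivative_eq_intros DERIV_chain2[OF has_real_derivative_flat] simp: algebra_simps)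

lemma has_real_derivative_flat_step_deriv: "(flat_step_deriv has_real_derivative flat_step_deriv2 x) (at x)"
  unfolding flat_step_deriv_def [abs_def] flat_step_deriv2_def
  by (auto intro!: derivative_eq_intros DERIV_chain2[OF has_real_derivative_flat_deriv] simp: algebra_simps)

lemma continuous_on_flat_step_deriv2: "continuous_on S flat_step_deriv2"
  unfolding flat_step_deriv2_def [abs_def]
  by (intro continuous_at_imp_continuous_on ballI continuous_intros
      continuous_at_compose[OF _ isCont_flat_deriv2, unfolded o_def])

lemma fpiece_unit:
  "fpiece 1 0 0 x =
    (if x < 1/16 then - x
     else if x < 3/16 then 8 * (x - 1/8)\<^sup>2 - 3/32
     else if x < 1/2 then - (5/16) * exp (5/16 / (x - 1/2) + 1) + 1/4
     else if x = 1/2 then 1/4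
     else if x < 13/16 then 5/16 * exp (- (5/16) / (x - 1/2) + 1) + 1/4
     else if x < 15/16 then - 8 * (x - 7/8)\<^sup>2 + 19/32
     else - x + 3/2)"
  by (simp add: fpiece_def)

definition fpiece_unit_deriv :: "real \<Rightarrow> real" where
  "fpiece_unit_deriv x =
    (if x < 1/16 then -1
     else if x < 3/16 then 16 * x - 2
     else if x < 13/16 then flat_step_deriv x
     else if x < 15/16 then 14 - 16 * x
     else -1)"

lemma fpiece_unit_eq_flat_step:
  assumes "x \<in> {3/16..13/16}"
  shows "fpiece 1 0 0 x = 1/4 + flat_step x"
proof -
  consider "x < 1/2" | "x = 1/2" | "1/2 < x" "x < 13/16" | "x = 13/16"
    using assms by fastforce
  then show ?thesis
  proof cases
    case 1
    have "exp 1 * exp (- 1 / (16/5 * (1/2 - x))) = exp (5/16 / (x - 1/2) + 1)"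
      using 1 by (simp add: exp_add [symmetric] field_simps)
    then show ?thesis
      using assms 1 by (simp add: fpiece_unit flat_step_def flat_def)
  next
    case 3
    have "exp 1 * exp (- 1 / (16/5 * (x - 1/2))) = exp (- (5/16) / (x - 1/2) + 1)"
      using 3 by (simp add: exp_add [symmetric] field_simps)
    then show ?thesis
      using 3 by (simp add: fpiece_unit flat_step_def flat_def)
  next
    case 4
    show ?thesis
      unfolding 4 by (simp add: fpiece_unit flat_step_def flat_def exp_minus power2_eq_square)
  qed (simp add: fpiece_unit flat_step_def flat_def)
qed

lemma fpiece_unit_deriv_eq_flat_step_deriv:
  assumes "x \<in> {3/16..13/16}"
  shows "fpiece_unit_deriv x = flat_step_deriv x"
proof (cases "x = 13/16")
  case True
  show ?thesis
    unfolding True by (simp add: fpiece_unit_deriv_def flat_step_deriv_def flat_deriv_def exp_minus)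
qed (use assms in \<open>auto simp: fpiece_unit_deriv_def\<close>)

lemma has_lipschitz_derivative_on_fpiece_unit:
  "has_lipschitz_derivative_on (fpiece 1 0 0) fpiece_unit_deriv {0..1}"
proof -
  have linear_left: "has_lipschitz_derivative_on (fpiece 1 0 0) fpiece_unit_deriv {0..1/16}"
    by (rule has_lipschitz_derivative_on_IccI [where h = "\<lambda>x. - x" and h' = "\<lambda>_. -1" and h'' = "\<lambda>_. 0"])
      (auto intro!: derivative_eq_intros simp: fpiece_unit fpiece_unit_deriv_def power2_eq_square)
  have parabola_left: "has_lipschitz_derivative_on (fpiece 1 0 0) fpiece_unit_deriv {1/16..3/16}"
    by (rule has_lipschitz_derivative_on_IccI
          [where h = "\<lambda>x. 8 * (x - 1/8)\<^sup>2 - 3/32" and h' = "\<lambda>x. 16 * x - 2" and h'' = "\<lambda>_. 16"])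
      (auto intro!: derivative_eq_intros simp: fpiece_unit fpiece_unit_deriv_def power2_eq_square
        algebra_simps flat_step_deriv_def flat_deriv_def exp_minus)
  have middle: "has_lipschitz_derivative_on (fpiece 1 0 0) fpiece_unit_deriv {3/16..13/16}"
    by (rule has_lipschitz_derivative_on_IccI [where h = "\<lambda>x. 1/4 + flat_step x",
          OF _ has_real_derivative_flat_step_deriv continuous_on_flat_step_deriv2])
      (auto intro!: derivative_eq_intros has_real_derivative_flat_step
        simp: fpiece_unit_eq_flat_step fpiece_unit_deriv_eq_flat_step_deriv)
  have parabola_right: "has_lipschitz_derivative_on (fpiece 1 0 0) fpiece_unit_deriv {13/16..15/16}"
    by (rule has_lipschitz_derivative_on_IccI
          [where h = "\<lambda>x. 19/32 - 8 * (x - 7/8)\<^sup>2" and h' = "\<lambda>x. 14 - 16 * x" and h'' = "\<lambda>_. -16"])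
      (auto intro!: derivative_eq_intros simp: fpiece_unit fpiece_unit_deriv_def power2_eq_square algebra_simps)
  have linear_right: "has_lipschitz_derivative_on (fpiece 1 0 0) fpiece_unit_deriv {15/16..1}"
    by (rule has_lipschitz_derivative_on_IccI [where h = "\<lambda>x. 3/2 - x" and h' = "\<lambda>_. -1" and h'' = "\<lambda>_. 0"])
      (auto intro!: derivative_eq_intros simp: fpiece_unit fpiece_unit_deriv_def)
  note concat = has_lipschitz_derivative_on_concat
  show ?thesis
    using concat [OF _ _ concat [OF _ _ concat [OF _ _ concat [OF _ _ linear_left parabola_left]
          middle] parabola_right] linear_right]
    by simp
qed

lemma fpiece_unit_ge:
  assumes "x \<in> {0..1}"
  shows "- 3/32 \<le> fpiece 1 0 0 x"
proof -
  consider "x < 3/16" | "3/16 \<le> x" "x < 1/2" | "x = 1/2" | "1/2 < x" "x < 13/16"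
    | "13/16 \<le> x" "x < 15/16" | "15/16 \<le> x"
    by linarith
  then show ?thesis
  proof cases
    case 2
    then have "fpiece 1 0 0 x = 1/4 - 5/16 * exp (5/16 / (x - 1/2) + 1)"
      by (simp add: fpiece_unit)
    moreover have "exp (5/16 / (x - 1/2) + 1) \<le> 1"
      using 2 by (simp add: field_simps)
    ultimately show ?thesis
      by linarith
  next
    case 4
    then have "fpiece 1 0 0 x = 1/4 + 5/16 * exp (- (5/16) / (x - 1/2) + 1)"
      by (simp add: fpiece_unit)
    moreover have "0 < exp (- (5/16) / (x - 1/2) + 1)"
      by simp
    ultimately show ?thesis
      by linarith
  next
    case 5
    then have "0 \<le> (x - 13/16) * (15/16 - x)"
      by simp
    then have "(x - 7/8)\<^sup>2 \<le> 1/256"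
      by (simp add: power2_eq_square algebra_simps)
    with 5 show ?thesis
      by (simp add: fpiece_unit)
  qed (use assms in \<open>auto simp: fpiece_unit\<close>)
qed

lemma fpiece_rescale:
  assumes M: "M > 0"
  shows "fpiece M s c x = c + M * fpiece 1 0 0 ((x - s) / M)"
proof -
  have thresholds: "((x - s) / M < 1/16) = (x < s + M/16)" "((x - s) / M < 3/16) = (x < s + 3*M/16)"
    "((x - s) / M < 1/2) = (x < s + M/2)" "((x - s) / M = 1/2) = (x = s + M/2)"
    "((x - s) / M < 13/16) = (x < s + 13*M/16)" "((x - s) / M < 15/16) = (x < s + 15*M/16)"
    using M by (auto simp: field_simps)
  have exponents: "5/16 / ((x - s) / M - 1/2) = 5*M/16 / (x - s - M/2)"
    "- (5/16) / ((x - s) / M - 1/2) = - (5*M/16) / (x - s - M/2)"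
    using M by (auto simp: field_simps)
  show ?thesis
    unfolding fpiece_unit fpiece_def [of M] thresholds exponents
    using M by (auto simp: field_simps power2_eq_square)
qed

lemma fext_eq_rescaled_fpiece_unit:
  fixes m :: "nat \<Rightarrow> real"
  assumes "m j > 0"
  shows "fext m j x = cseq m j + m j * fpiece 1 0 0 ((x - Sseq m j) / m j)"
proof (cases "x = Sseq m j")
  case True
  have "((\<lambda>y. cseq m j + Sseq m j - y) \<longlongrightarrow> cseq m j) (at_right (Sseq m j))"
    by (auto intro!: tendsto_eq_intros)
  moreover have "eventually (\<lambda>y. cseq m j + Sseq m j - y = fj m j y) (at_right (Sseq m j))"
    using eventually_at_right_real [of "Sseq m j" "Sseq m j + m j / 16"] assms
    by (auto elim!: eventually_mono simp: fj_def fpiece_def)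
  ultimately have "(fj m j \<longlongrightarrow> cseq m j) (at_right (Sseq m j))"
    by (rule Lim_transform_eventually)
  then have "Lim (at_right (Sseq m j)) (fj m j) = cseq m j"
    by (intro tendsto_Lim) simp_all
  with True show ?thesis
    by (simp add: fext_def fpiece_unit)
next
  case False
  with assms show ?thesis
    by (simp add: fext_def fj_def fpiece_rescale [OF assms])
qed

lemma has_lipschitz_derivative_on_fext:
  fixes m :: "nat \<Rightarrow> real"
  assumes "m j > 0"
  shows "has_lipschitz_derivative_on (fext m j) (\<lambda>x. fpiece_unit_deriv ((x - Sseq m j) / m j))
           {Sseq m j..Sseq m (Suc j)}"
proof -
  have "fext m j = (\<lambda>x. cseq m j + m j * fpiece 1 0 0 ((x - Sseq m j) / m j))"
    using fext_eq_rescaled_fpiece_unit [of m j, OF assms] by blast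
  moreover have "Sseq m (Suc j) = Sseq m j + m j"
    by (simp add: Sseq_def)
  ultimately show ?thesis
    using has_lipschitz_derivative_on_rescale [OF assms has_lipschitz_derivative_on_fpiece_unit] by simp
qed

lemma fext_ge:
  fixes m :: "nat \<Rightarrow> real"
  assumes "m j > 0" and "x \<in> {Sseq m j..Sseq m (Suc j)}"
  shows "cseq m j - 3 * m j / 32 \<le> fext m j x"
proof -
  have "(x - Sseq m j) / m j \<in> {0..1}"
    using assms by (auto simp: Sseq_def field_simps)
  from mult_left_mono [OF fpiece_unit_ge [OF this], of "m j"] assms(1) show ?thesis
    by (simp add: fext_eq_rescaled_fpiece_unit)
qed

theorem proposition5p2:
  fixes m :: "nat \<Rightarrow> real"
  assumes pos: "\<And>k. m k > 0"
    and div: "filterlim (\<lambda>n. \<Sum>k<n. m k) at_top sequentially"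
    and lim0: "m \<longlonglongrightarrow> 0"
  shows "\<forall>j. continuous_on {Sseq m j .. Sseq m (Suc j)} (fext m j)
          \<and> (\<forall>x \<in> {Sseq m j .. Sseq m (Suc j)}. fext m j x \<ge> cseq m j - 3 * m j / 32)
          \<and> (\<exists>D. (\<forall>x \<in> {Sseq m j .. Sseq m (Suc j)}.
                    (fext m j has_real_derivative D x) (at x within {Sseq m j .. Sseq m (Suc j)}))
               \<and> D (Sseq m j) = -1 \<and> D (Sseq m (Suc j)) = -1
               \<and> (\<forall>x \<in> {Sseq m j .. Sseq m (Suc j)}. \<exists>e>0. \<exists>L.
                    L-lipschitz_on ({Sseq m j .. Sseq m (Suc j)} \<inter> cball x e) D))"
proof (intro allI)
  fix j
  let ?I = "{Sseq m j .. Sseq m (Suc j)}"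
  let ?D = "\<lambda>x. fpiece_unit_deriv ((x - Sseq m j) / m j)"
  obtain L where deriv: "\<forall>x\<in>?I. (fext m j has_real_derivative ?D x) (at x within ?I)"
    and lip: "L-lipschitz_on ?I ?D"
    using has_lipschitz_derivative_on_fext [of m j, OF pos] unfolding has_lipschitz_derivative_on_def by blast
  have "continuous_on ?I (fext m j)"
    using deriv by (auto simp: continuous_on_eq_continuous_within intro: DERIV_continuous)
  moreover have "?D (Sseq m j) = -1" "?D (Sseq m (Suc j)) = -1"
    using pos [of j] by (simp_all add: fpiece_unit_deriv_def Sseq_def)
  moreover have "\<forall>x\<in>?I. \<exists>e>0. \<exists>L. L-lipschitz_on (?I \<inter> cball x e) ?D"
    using lip by (meson Int_lower1 lipschitz_on_subset zero_less_one)
  ultimately show "continuous_on ?I (fext m j)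
      \<and> (\<forall>x \<in> ?I. fext m j x \<ge> cseq m j - 3 * m j / 32)
      \<and> (\<exists>D. (\<forall>x \<in> ?I. (fext m j has_real_derivative D x) (at x within ?I))
           \<and> D (Sseq m j) = -1 \<and> D (Sseq m (Suc j)) = -1
           \<and> (\<forall>x \<in> ?I. \<exists>e>0. \<exists>L. L-lipschitz_on (?I \<inter> cball x e) D))"
    using deriv fext_ge [of m j, OF pos] by (intro conjI exI [of _ ?D]) auto
qed

end
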